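(* Every $4$-unitrade of cardinality $9$ is equivalent to $P=\{\{1,2,5,6\}, \{1,3,5,6\}, \{2,3,5,6\}, \{1,2,4,6\}, \{1,3,4,6\}, \{2,3,4,6\}, \{1,2,4,5\}, \{1,3,4,5\}, \{2,3,4,5\}\}$ (and $P$ is a $4$-unitrade of cardinality $9$).
   Context: A $k$-unitrade on a finite set $V$ is a set $U$ of $k$-element subsets (blocks) of $V$ such that every $(k-1)$-element subset of $V$ is contained in an even number of blocks of $U$. Two collections $U_1$ of subsets of $V_1$ and $U_2$ of subsets of $V_2$ are equivalent if there is an injection $f:V_1\to V_2$ with $U_2=\{f(u): u\in U_1\}$. *)

theory Defs
  imports Main
begin

definition unitrade :: "nat \<Rightarrow> 'a set \<Rightarrow> 'a set set \<Rightarrow> bool" where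
  "unitrade k V U \<longleftrightarrow> finite V \<and> (\<forall>B\<in>U. B \<subseteq> V \<and> card B = k) \<and>
     (\<forall>S. S \<subseteq> V \<and> card S = k - 1 \<longrightarrow> even (card {B\<in>U. S \<subseteq> B}))"

definition equivalent :: "'a set \<Rightarrow> 'a set set \<Rightarrow> 'b set \<Rightarrow> 'b set set \<Rightarrow> bool" where
  "equivalent V1 U1 V2 U2 \<longleftrightarrow>
     (\<exists>f. inj_on f V1 \<and> f ` V1 \<subseteq> V2 \<and> U2 = (\<lambda>u. f ` u) ` U1)"

definition P_trade :: "nat set set" where
  "P_trade = {{1,2,5,6}, {1,3,5,6}, {2,3,5,6}, {1,2,4,6}, {1,3,4,6}, {2,3,4,6},
              {1,2,4,5}, {1,3,4,5}, {2,3,4,5}}"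

end

(*
  The link of a point x (the blocks through x, with x removed) of a k-unitrade is a
  (k-1)-unitrade; hence every point has degree at least k, and double counting bounds the
  number of points by k |U| / (minimum degree). A (k-1)-unitrade with only k blocks is the
  set of all (k-1)-subsets of a k-set Y, so at a point of minimal degree k one may delete the
  blocks through the point and toggle Y, obtaining a k-unitrade with |U| - k +- 1 blocks.
  These two facts rule out 3-unitrades with 5 blocks and 4-unitrades with 6 blocks, and force
  every point of a 4-unitrade with 9 blocks to have degree at least 6, so that it lives on
  exactly 6 points. On k + 2 points every block is the complement of a pair, and the parity
  condition says that the pairs not complemented by a block form an equivalence relation with
  at most two classes A, C; the 9 blocks are the complements of the pairs across A and C,
  so |A| |C| = 9 and |A| = |C| = 3, which is the configuration P.
*)

theory Submission
  imports Defs
begin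

section \<open>Unitrades, links and degrees\<close>

text \<open>The ground set is left implicit: a (k-1)-set outside the union of the blocks
  lies in no block.\<close>

definition is_unitrade :: "nat \<Rightarrow> 'a set set \<Rightarrow> bool" where
  "is_unitrade k U \<longleftrightarrow> finite U \<and> (\<forall>B\<in>U. finite B \<and> card B = k) \<and>
     (\<forall>S. finite S \<and> card S + 1 = k \<longrightarrow> even (card {B\<in>U. S \<subseteq> B}))"

definition deg :: "'a set set \<Rightarrow> 'a \<Rightarrow> nat" where
  "deg U x = card {B\<in>U. x \<in> B}"

definition link :: "'a set set \<Rightarrow> 'a \<Rightarrow> 'a set set" where
  "link U x = (\<lambda>B. B - {x}) ` {B\<in>U. x \<in> B}"

lemma is_unitradeD:
  assumes "is_unitrade k U"
  shows is_unitrade_finite: "finite U"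
    and is_unitrade_block: "B \<in> U \<Longrightarrow> finite B \<and> card B = k"
    and is_unitrade_even: "finite S \<Longrightarrow> card S + 1 = k \<Longrightarrow> even (card {B\<in>U. S \<subseteq> B})"
  using assms by (auto simp: is_unitrade_def)

lemma finite_Union_unitrade: "is_unitrade k U \<Longrightarrow> finite (\<Union>U)"
  by (meson finite_Union is_unitradeD)

lemma is_unitrade_if_unitrade:
  assumes "unitrade k V U"
  shows "is_unitrade k U"
  unfolding is_unitrade_def
proof (intro conjI allI impI ballI)
  have V: "finite V" "\<forall>B\<in>U. B \<subseteq> V \<and> card B = k"
    and even: "\<And>S. S \<subseteq> V \<Longrightarrow> card S = k - 1 \<Longrightarrow> even (card {B\<in>U. S \<subseteq> B})"
    using assms by (auto simp: unitrade_def)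
  then have "U \<subseteq> Pow V" by auto
  then show "finite U" using V(1) finite_subset by blast
  show "finite B" "card B = k" if "B \<in> U" for B
    using V that finite_subset by blast+
  fix S :: "'a set" assume S: "finite S \<and> card S + 1 = k"
  show "even (card {B\<in>U. S \<subseteq> B})"
  proof (cases "S \<subseteq> V")
    case True
    moreover have "card S = k - 1" using S by auto
    ultimately show ?thesis using even by blast
  next
    case False
    then have "{B\<in>U. S \<subseteq> B} = {}" using V by auto
    then show ?thesis by (metis card.empty even_zero)
  qed
qed

lemma card_link: "card (link U x) = deg U x"
proof -
  have "inj_on (\<lambda>B. B - {x}) {B\<in>U. x \<in> B}"
    by (rule inj_onI) (metis insert_Diff mem_Collect_eq)
  then show ?thesis by (simp add: link_def deg_def card_image)
qed

lemma mem_link_iff: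
  assumes "x \<notin> S"
  shows "S \<in> link U x \<longleftrightarrow> insert x S \<in> U"
proof
  assume "S \<in> link U x"
  then obtain B where "B \<in> U" "x \<in> B" "S = B - {x}" by (auto simp: link_def)
  then show "insert x S \<in> U" by (simp add: insert_absorb)
next
  assume "insert x S \<in> U"
  then show "S \<in> link U x"
    using assms unfolding link_def by (intro image_eqI[of _ _ "insert x S"]) auto
qed

lemma is_unitrade_link:
  assumes U: "is_unitrade k U"
  shows "is_unitrade (k - 1) (link U x)"
  unfolding is_unitrade_def
proof (intro conjI allI impI ballI)
  show "finite (link U x)"
    using is_unitrade_finite[OF U] by (simp add: link_def)
  show "finite B" "card B = k - 1" if B: "B \<in> link U x" for B
  proof -
    obtain B0 where "B0 \<in> U" "x \<in> B0" "B = B0 - {x}"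
      using B by (auto simp: link_def)
    then show "finite B" "card B = k - 1" using is_unitrade_block[OF U] by auto
  qed
  fix S :: "'a set" assume S: "finite S \<and> card S + 1 = k - 1"
  show "even (card {B\<in>link U x. S \<subseteq> B})"
  proof (cases "x \<in> S")
    case True
    then have "{B\<in>link U x. S \<subseteq> B} = {}" by (auto simp: link_def)
    then show ?thesis by (metis card.empty even_zero)
  next
    case False
    have "{B\<in>link U x. S \<subseteq> B} = (\<lambda>B. B - {x}) ` {B\<in>U. insert x S \<subseteq> B}"
      using False by (auto simp: link_def)
    moreover have "inj_on (\<lambda>B. B - {x}) {B\<in>U. insert x S \<subseteq> B}"
      by (rule inj_onI) (metis insert_Diff insert_subset mem_Collect_eq)
    ultimately have "card {B\<in>link U x. S \<subseteq> B} = card {B\<in>U. insert x S \<subseteq> B}"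
      by (simp add: card_image)
    moreover have "card (insert x S) + 1 = k" using S False by auto
    ultimately show ?thesis
      using is_unitrade_even[OF U, of "insert x S"] S by simp
  qed
qed

lemma unitrade_other_block:
  assumes U: "is_unitrade k U" and "B \<in> U" "S \<subseteq> B" "finite S" "card S + 1 = k"
  obtains B' where "B' \<in> U" "B' \<noteq> B" "S \<subseteq> B'"
proof (rule ccontr)
  assume "\<not> thesis"
  then have "{B\<in>U. S \<subseteq> B} = {B}" using assms that by blast
  then show False using is_unitrade_even[OF U assms(4,5)] by simp
qed

lemma unitrade_card_ge:
  assumes U: "is_unitrade k U" and "1 \<le> k" "U \<noteq> {}"
  shows "k + 1 \<le> card U"
proof -
  obtain B where B: "B \<in> U" using assms(3) by blast
  have fB: "finite B" "card B = k" using is_unitrade_block[OF U B] by auto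
  have "\<exists>B'. B' \<in> U \<and> B' \<noteq> B \<and> B - {b} \<subseteq> B'" if "b \<in> B" for b
    by (rule unitrade_other_block[OF U B, of "B - {b}"]) (use fB that assms(2) in auto)
  then obtain f where f: "\<And>b. b \<in> B \<Longrightarrow> f b \<in> U \<and> f b \<noteq> B \<and> B - {b} \<subseteq> f b"
    by metis
  have "inj_on f B"
  proof (rule inj_onI, rule ccontr)
    fix b c assume bc: "b \<in> B" "c \<in> B" "f b = f c" "b \<noteq> c"
    then have "B - {b} \<subseteq> f b" "B - {c} \<subseteq> f b" using f by metis+
    then have "B \<subseteq> f b" using \<open>b \<noteq> c\<close> by blast
    moreover have "finite (f b)" "card (f b) = k" using is_unitrade_block[OF U] f bc by auto
    ultimately have "B = f b" using fB card_subset_eq by metis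
    then show False using f bc by auto
  qed
  moreover have "B \<notin> f ` B" using f by auto
  ultimately have "card (insert B (f ` B)) = k + 1" using fB by (simp add: card_image)
  moreover have "insert B (f ` B) \<subseteq> U" using f B by auto
  then have "card (insert B (f ` B)) \<le> card U"
    by (rule card_mono[OF is_unitrade_finite[OF U]])
  ultimately show ?thesis by simp
qed

lemma deg_ge:
  assumes U: "is_unitrade k U" and "2 \<le> k" "x \<in> \<Union>U"
  shows "k \<le> deg U x"
proof -
  obtain B where "B \<in> U" "x \<in> B" using assms(3) by blast
  then have "link U x \<noteq> {}" unfolding link_def by blast
  moreover have "1 \<le> k - 1" using assms(2) by simp
  ultimately have "k - 1 + 1 \<le> card (link U x)"
    by (rule unitrade_card_ge[OF is_unitrade_link[OF U], rotated])
  then show ?thesis using assms(2) by (simp add: card_link)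
qed

lemma sum_deg:
  assumes U: "is_unitrade k U"
  shows "(\<Sum>x\<in>\<Union>U. deg U x) = k * card U"
proof -
  have "(\<Sum>x\<in>\<Union>U. deg U x) = (\<Sum>x\<in>\<Union>U. \<Sum>B\<in>U. if x \<in> B then 1 else 0)"
    using is_unitrade_finite[OF U] by (simp add: deg_def sum.If_cases Int_def)
  also have "\<dots> = (\<Sum>B\<in>U. \<Sum>x\<in>\<Union>U. if x \<in> B then 1 else 0)"
    by (rule sum.swap)
  also have "\<dots> = (\<Sum>B\<in>U. k)"
  proof (rule sum.cong[OF refl])
    fix B assume "B \<in> U"
    then have "\<Union>U \<inter> B = B" "card B = k" using is_unitrade_block[OF U] by auto
    then show "(\<Sum>x\<in>\<Union>U. if x \<in> B then 1 else 0) = k"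
      using finite_Union_unitrade[OF U] by (simp add: sum.If_cases)
  qed
  finally show ?thesis by simp
qed

lemma card_Union_unitrade_le:
  assumes U: "is_unitrade k U" and "\<And>x. x \<in> \<Union>U \<Longrightarrow> d \<le> deg U x"
  shows "d * card (\<Union>U) \<le> k * card U"
proof -
  have "d * card (\<Union>U) = (\<Sum>x\<in>\<Union>U. d)" by simp
  also have "\<dots> \<le> (\<Sum>x\<in>\<Union>U. deg U x)" using assms(2) by (rule sum_mono)
  finally show ?thesis using sum_deg[OF U] by simp
qed

lemma card_unitrade_le_binomial:
  assumes U: "is_unitrade k U"
  shows "card U \<le> card (\<Union>U) choose k"
proof -
  have "U \<subseteq> {B. B \<subseteq> \<Union>U \<and> card B = k}" using is_unitrade_block[OF U] by auto
  moreover have "finite {B. B \<subseteq> \<Union>U \<and> card B = k}"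
    using finite_Union_unitrade[OF U] by simp
  ultimately show ?thesis
    using card_mono n_subsets[OF finite_Union_unitrade[OF U]] by fastforce
qed

lemma binomial_le_1: "n \<le> k \<Longrightarrow> n choose k \<le> 1"
  by (cases "n = k") (simp_all add: binomial_eq_0)

section \<open>Minimal unitrades and switching at a point of minimal degree\<close>

lemma unitrade_simplex:
  assumes D: "is_unitrade j D" and j: "2 \<le> j" and card_D: "card D = j + 1"
  shows "card (\<Union>D) = j + 1" "D = {S. S \<subseteq> \<Union>D \<and> card S = j}"
proof -
  have "j * card (\<Union>D) \<le> j * card D"
    by (rule card_Union_unitrade_le[OF D deg_ge[OF D j]])
  then have "card (\<Union>D) \<le> j + 1" using j card_D by (simp only: mult_le_cancel1)
  moreover have "\<not> card (\<Union>D) \<le> j"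
  proof
    assume "card (\<Union>D) \<le> j"
    then have "card (\<Union>D) choose j \<le> 1" by (rule binomial_le_1)
    then show False using card_unitrade_le_binomial[OF D] card_D j by simp
  qed
  ultimately show card_Union: "card (\<Union>D) = j + 1" by simp
  have "D \<subseteq> {S. S \<subseteq> \<Union>D \<and> card S = j}" using is_unitrade_block[OF D] by auto
  moreover have "card {S. S \<subseteq> \<Union>D \<and> card S = j} = card D"
    using n_subsets[OF finite_Union_unitrade[OF D]] card_Union card_D by simp
  moreover have "finite {S. S \<subseteq> \<Union>D \<and> card S = j}"
    using finite_Union_unitrade[OF D] by simp
  ultimately show "D = {S. S \<subseteq> \<Union>D \<and> card S = j}"
    by (metis card_subset_eq)
qed

lemma is_unitrade_toggle:
  assumes W: "finite W" "\<And>B. B \<in> W \<Longrightarrow> finite B \<and> card B = k"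
    and Y: "finite Y" "card Y = k"
    and odd_iff: "\<And>S. finite S \<Longrightarrow> card S + 1 = k \<Longrightarrow>
      odd (card {B\<in>W. S \<subseteq> B}) \<longleftrightarrow> S \<subseteq> Y"
  shows "is_unitrade k (if Y \<in> W then W - {Y} else insert Y W)" (is "is_unitrade k ?W'")
  unfolding is_unitrade_def
proof (intro conjI allI impI ballI)
  show "finite ?W'" using W by simp
  show "finite B" "card B = k" if "B \<in> ?W'" for B
    using that W Y by (auto split: if_splits)
  fix S :: "'a set" assume S: "finite S \<and> card S + 1 = k"
  let ?N = "{B\<in>W. S \<subseteq> B}"
  have fin: "finite ?N" using W by simp
  show "even (card {B\<in>?W'. S \<subseteq> B})"
  proof (cases "S \<subseteq> Y")
    case False
    then have "{B\<in>?W'. S \<subseteq> B} = ?N" by auto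
    then show ?thesis using odd_iff S False by auto
  next
    case True
    then have odd: "odd (card ?N)" using odd_iff S by auto
    show ?thesis
    proof (cases "Y \<in> W")
      case True
      then have "{B\<in>?W'. S \<subseteq> B} = ?N - {Y}" "Y \<in> ?N" using \<open>S \<subseteq> Y\<close> by auto
      then show ?thesis using odd fin by (simp add: card_Diff_singleton)
    next
      case False
      then have "{B\<in>?W'. S \<subseteq> B} = insert Y ?N" "Y \<notin> ?N" using \<open>S \<subseteq> Y\<close> by auto
      then show ?thesis using odd fin by simp
    qed
  qed
qed

lemma unitrade_blocks_containing_k_set:
  assumes U: "is_unitrade k U" and T: "finite T" "card T = k"
  shows "{B\<in>U. T \<subseteq> B} = {T} \<inter> U"
proof -
  have "B = T" if "B \<in> U" "T \<subseteq> B" for B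
    using is_unitrade_block[OF U that(1)] card_subset_eq that(2) T(2) by metis
  then show ?thesis by auto
qed

lemma odd_blocks_avoiding_iff_mem_link:
  assumes U: "is_unitrade k U" and S: "finite S" "card S + 1 = k"
  shows "odd (card {B\<in>U. x \<notin> B \<and> S \<subseteq> B}) \<longleftrightarrow> S \<in> link U x"
proof (cases "x \<in> S")
  case True
  then have "{B\<in>U. x \<notin> B \<and> S \<subseteq> B} = {}" "S \<notin> link U x" by (auto simp: link_def)
  then show ?thesis by (metis card.empty even_zero)
next
  case False
  \<comment> \<open>the only block through x that can contain S is insert x S\<close>
  have "{B\<in>U. insert x S \<subseteq> B} = {insert x S} \<inter> U"
    using unitrade_blocks_containing_k_set[OF U, of "insert x S"] S False by simp
  then have "{B\<in>U. S \<subseteq> B} = {B\<in>U. x \<notin> B \<and> S \<subseteq> B} \<union> ({insert x S} \<inter> U)"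
    by auto
  moreover have "card ({B\<in>U. x \<notin> B \<and> S \<subseteq> B} \<union> ({insert x S} \<inter> U)) =
      card {B\<in>U. x \<notin> B \<and> S \<subseteq> B} + card ({insert x S} \<inter> U)"
    using is_unitrade_finite[OF U] by (intro card_Un_disjoint) auto
  ultimately have "card {B\<in>U. S \<subseteq> B} =
      card {B\<in>U. x \<notin> B \<and> S \<subseteq> B} + card ({insert x S} \<inter> U)"
    by simp
  then show ?thesis
    using is_unitrade_even[OF U S] mem_link_iff[OF False, of U] by (auto split: if_splits)
qed

lemma unitrade_switch:
  fixes U :: "'a set set"
  assumes U: "is_unitrade k U" and k: "3 \<le> k" and deg: "deg U x = k"
  obtains U' :: "'a set set"
    where "is_unitrade k U'" "card U' + k = card U + 1 \<or> card U' + k + 1 = card U"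
proof -
  define Y where "Y = \<Union>(link U x)"
  have L: "is_unitrade (k - 1) (link U x)" "card (link U x) = k - 1 + 1"
    using is_unitrade_link[OF U] card_link[of U x] deg k by auto
  have Y: "card Y = k" "link U x = {S. S \<subseteq> Y \<and> card S = k - 1}"
    using unitrade_simplex[OF L(1) _ L(2)] k unfolding Y_def by auto
  define U0 where "U0 = {B\<in>U. x \<notin> B}"
  have fin_U0: "finite U0" using is_unitrade_finite[OF U] by (simp add: U0_def)
  have "card (U0 \<union> {B\<in>U. x \<in> B}) = card U0 + card {B\<in>U. x \<in> B}"
    using fin_U0 is_unitrade_finite[OF U] by (intro card_Un_disjoint) (auto simp: U0_def)
  moreover have "U0 \<union> {B\<in>U. x \<in> B} = U" by (auto simp: U0_def)
  ultimately have card_U0: "card U0 + k = card U" using deg by (simp add: deg_def)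
  define U' where "U' = (if Y \<in> U0 then U0 - {Y} else insert Y U0)"
  have "is_unitrade k U'"
    unfolding U'_def
  proof (rule is_unitrade_toggle[OF fin_U0 _ _ Y(1)])
    show "finite B \<and> card B = k" if "B \<in> U0" for B
      using that is_unitrade_block[OF U] by (simp add: U0_def)
    show "finite Y" using Y(1) k card_ge_0_finite by force
    show "odd (card {B\<in>U0. S \<subseteq> B}) \<longleftrightarrow> S \<subseteq> Y" if S: "finite S" "card S + 1 = k" for S
    proof -
      have "S \<in> link U x \<longleftrightarrow> S \<subseteq> Y" using Y(2) S(2) by auto
      then show ?thesis using odd_blocks_avoiding_iff_mem_link[OF U S, of x] by (simp add: U0_def)
    qed
  qed
  moreover have "card U' + 1 = card U0 \<or> card U' = card U0 + 1"
    using card.remove[OF fin_U0] card.insert[OF fin_U0] by (auto simp: U'_def)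
  ultimately show ?thesis
    using card_U0 by (intro that[of U']) auto
qed

section \<open>Small unitrades\<close>

lemma no_unitrade_3_5:
  fixes D :: "'a set set"
  assumes D: "is_unitrade 3 D"
  shows "card D \<noteq> 5"
proof
  assume card_D: "card D = 5"
  have "4 \<le> deg D x" if x: "x \<in> \<Union>D" for x
  proof (rule ccontr)
    assume "\<not> 4 \<le> deg D x"
    then have "deg D x = 3" using deg_ge[OF D _ x] by simp
    then obtain D' :: "'a set set"
      where D': "is_unitrade 3 D'" "card D' + 3 = card D + 1 \<or> card D' + 3 + 1 = card D"
      by (rule unitrade_switch[OF D order.refl])
    then have "D' \<noteq> {}" "card D' < 4" using card_D by auto
    then show False using unitrade_card_ge[OF D'(1)] by simp
  qed
  then have "4 * card (\<Union>D) \<le> 3 * card D" by (rule card_Union_unitrade_le[OF D])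
  then have "card (\<Union>D) choose 3 \<le> 1" using card_D by (intro binomial_le_1) simp
  then show False using card_unitrade_le_binomial[OF D] card_D by simp
qed

lemma unitrade4_deg_ge_6:
  fixes U :: "'a set set"
  assumes U: "is_unitrade 4 U" and x: "x \<in> \<Union>U"
    and no_switch: "\<And>U' :: 'a set set. is_unitrade 4 U' \<Longrightarrow>
      card U' + 3 \<noteq> card U \<and> card U' + 5 \<noteq> card U"
  shows "6 \<le> deg U x"
proof -
  have "deg U x \<noteq> 4"
  proof
    assume deg_4: "deg U x = 4"
    obtain U' :: "'a set set"
      where "is_unitrade 4 U'" "card U' + 4 = card U + 1 \<or> card U' + 4 + 1 = card U"
      by (rule unitrade_switch[OF U _ deg_4]) (simp (no_asm))
    then show False using no_switch by force
  qed
  moreover have "deg U x \<noteq> 5"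
  proof -
    have "is_unitrade 3 (link U x)" using is_unitrade_link[OF U] by simp
    then show ?thesis using no_unitrade_3_5 card_link by metis
  qed
  ultimately show ?thesis using deg_ge[OF U _ x] by simp
qed

lemma no_unitrade_4_6:
  fixes U :: "'a set set"
  assumes U: "is_unitrade 4 U"
  shows "card U \<noteq> 6"
proof
  assume card_U: "card U = 6"
  have "6 \<le> deg U x" if "x \<in> \<Union>U" for x
  proof (rule unitrade4_deg_ge_6[OF U that])
    fix U' :: "'a set set" assume "is_unitrade 4 U'"
    then have "card U' = 0 \<or> 5 \<le> card U'" using unitrade_card_ge[of 4 U'] by force
    then show "card U' + 3 \<noteq> card U \<and> card U' + 5 \<noteq> card U" using card_U by auto
  qed
  then have "6 * card (\<Union>U) \<le> 4 * card U" by (rule card_Union_unitrade_le[OF U])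
  then have "card (\<Union>U) choose 4 \<le> 1" using card_U by (intro binomial_le_1) simp
  then show False using card_unitrade_le_binomial[OF U] card_U by simp
qed

lemma card_Union_unitrade_4_9:
  fixes U :: "'a set set"
  assumes U: "is_unitrade 4 U" and card_U: "card U = 9"
  shows "card (\<Union>U) = 6"
proof -
  have "6 \<le> deg U x" if "x \<in> \<Union>U" for x
  proof (rule unitrade4_deg_ge_6[OF U that])
    fix U' :: "'a set set" assume U': "is_unitrade 4 U'"
    then have "card U' = 0 \<or> 5 \<le> card U'" using unitrade_card_ge[of 4 U'] by force
    then show "card U' + 3 \<noteq> card U \<and> card U' + 5 \<noteq> card U"
      using no_unitrade_4_6[OF U'] card_U by auto
  qed
  then have "6 * card (\<Union>U) \<le> 4 * card U" by (rule card_Union_unitrade_le[OF U])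
  then have "card (\<Union>U) \<le> 6" using card_U by simp
  moreover have "\<not> card (\<Union>U) \<le> 5"
  proof
    assume "card (\<Union>U) \<le> 5"
    then have "card (\<Union>U) choose 4 \<le> 5 choose 4" by (rule binomial_right_mono)
    also have "\<dots> = 5" using binomial_Suc_n[of 4] by simp
    finally show False using card_unitrade_le_binomial[OF U] card_U by simp
  qed
  ultimately show ?thesis by simp
qed

section \<open>Unitrades on k + 2 points\<close>

lemma unitrade_k_plus_2_block:
  assumes U: "is_unitrade k U" and W: "\<Union>U \<subseteq> W" "card W = k + 2" and "B \<in> U"
  obtains x y where "x \<in> W" "y \<in> W" "x \<noteq> y" "B = W - {x, y}"
proof -
  have "B \<subseteq> W" using \<open>B \<in> U\<close> W(1) by blast
  moreover have "card (W - B) = 2"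
    using card_Diff_subset[OF _ \<open>B \<subseteq> W\<close>] is_unitrade_block[OF U \<open>B \<in> U\<close>] W(2) by simp
  then obtain x y where "W - B = {x, y}" "x \<noteq> y" by (meson card_2_iff)
  ultimately show ?thesis using that by blast
qed

lemma unitrade_k_plus_2_parity:
  assumes U: "is_unitrade k U" and W: "\<Union>U \<subseteq> W" "card W = k + 2"
    and pqr: "p \<in> W" "q \<in> W" "r \<in> W" "p \<noteq> q" "p \<noteq> r" "q \<noteq> r"
  shows "even (card ({W - {q, r}, W - {p, r}, W - {p, q}} \<inter> U))"
proof -
  have fin_W: "finite W" using W(2) card_ge_0_finite by force
  define T where "T = W - {p, q, r}"
  have "card {p, q, r} = 3" using pqr by simp
  moreover have "card {p, q, r} \<le> card W" using pqr fin_W by (intro card_mono) auto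
  ultimately have card_T: "card T + 1 = k"
    using card_Diff_subset[of "{p, q, r}" W] pqr W(2) fin_W by (simp add: T_def)
  have "{B\<in>U. T \<subseteq> B} = {W - {q, r}, W - {p, r}, W - {p, q}} \<inter> U"
  proof (intro equalityI subsetI)
    fix B assume "B \<in> {B\<in>U. T \<subseteq> B}"
    then have B: "B \<in> U" "T \<subseteq> B" by auto
    obtain u v where uv: "u \<in> W" "v \<in> W" "u \<noteq> v" "B = W - {u, v}"
      by (rule unitrade_k_plus_2_block[OF U W B(1)])
    have "u \<in> {p, q, r}" "v \<in> {p, q, r}" using uv B(2) unfolding T_def by blast+
    then have "B \<in> {W - {q, r}, W - {p, r}, W - {p, q}}"
      using uv(3,4) by (auto simp: insert_commute)
    then show "B \<in> {W - {q, r}, W - {p, r}, W - {p, q}} \<inter> U" using B(1) by blast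
  next
    fix B assume "B \<in> {W - {q, r}, W - {p, r}, W - {p, q}} \<inter> U"
    then show "B \<in> {B\<in>U. T \<subseteq> B}" unfolding T_def by blast
  qed
  then show ?thesis
    using is_unitrade_even[OF U _ card_T] fin_W by (simp add: T_def)
qed

lemma unitrade_k_plus_2_bipartite:
  assumes U: "is_unitrade k U" and W: "\<Union>U \<subseteq> W" "card W = k + 2"
  obtains A C where "A \<union> C = W" "A \<inter> C = {}" "U = (\<lambda>(a, c). W - {a, c}) ` (A \<times> C)"
proof -
  have fin_W: "finite W" using W(2) card_ge_0_finite by force
  define same where "same p q \<longleftrightarrow> W - {p, q} \<notin> U" for p q
  have same_commute: "same p q = same q p" for p q by (simp add: same_def insert_commute)
  have same_trans: "same q r = (same p q = same p r)"
    if "p \<in> W" "q \<in> W" "r \<in> W" "p \<noteq> q" "p \<noteq> r" "q \<noteq> r" for p q r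
  proof -
    have distinct: "W - {q, r} \<noteq> W - {p, r}" "W - {q, r} \<noteq> W - {p, q}" "W - {p, r} \<noteq> W - {p, q}"
      using that by blast+
    show ?thesis
      using unitrade_k_plus_2_parity[OF U W that] distinct unfolding same_def
      by (cases "W - {q, r} \<in> U"; cases "W - {p, r} \<in> U"; cases "W - {p, q} \<in> U") simp_all
  qed
  obtain p0 where p0: "p0 \<in> W" using W(2) by fastforce
  define A where "A = {y\<in>W. y = p0 \<or> same p0 y}"
  define C where "C = W - A"
  have side: "W - {x, y} \<in> U \<longleftrightarrow> (x \<in> A \<longleftrightarrow> y \<in> C)"
    if "x \<in> W" "y \<in> W" "x \<noteq> y" for x y
  proof -
    have "same x y \<longleftrightarrow> (x \<in> A \<longleftrightarrow> y \<in> A)"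
      using that p0 same_trans[of p0 x y] same_commute[of p0] by (auto simp: A_def)
    then show ?thesis using that by (auto simp: same_def C_def)
  qed
  have "U = (\<lambda>(a, c). W - {a, c}) ` (A \<times> C)"
  proof (intro equalityI subsetI)
    fix B assume "B \<in> U"
    then obtain x y where xy: "x \<in> W" "y \<in> W" "x \<noteq> y" "B = W - {x, y}"
      by (rule unitrade_k_plus_2_block[OF U W])
    then have "(x \<in> A \<and> y \<in> C) \<or> (y \<in> A \<and> x \<in> C)"
      using side[OF xy(1-3)] \<open>B \<in> U\<close> by (auto simp: C_def)
    then show "B \<in> (\<lambda>(a, c). W - {a, c}) ` (A \<times> C)"
      using xy(4) by (auto simp: insert_commute)
  next
    fix B assume "B \<in> (\<lambda>(a, c). W - {a, c}) ` (A \<times> C)"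
    then obtain a c where "a \<in> A" "c \<in> C" "B = W - {a, c}" by blast
    then show "B \<in> U" using side[of a c] by (auto simp: A_def C_def)
  qed
  moreover have "A \<union> C = W" "A \<inter> C = {}" by (auto simp: A_def C_def)
  ultimately show ?thesis using that by blast
qed

lemma card_complement_pairs:
  assumes "finite W" "A \<subseteq> W" "C \<subseteq> W" "A \<inter> C = {}"
  shows "card ((\<lambda>(a, c). W - {a, c}) ` (A \<times> C)) = card A * card C"
proof -
  have "inj_on (\<lambda>(a, c). W - {a, c}) (A \<times> C)"
  proof (rule inj_onI, clarify)
    fix a c a' c' assume ac: "a \<in> A" "c \<in> C" "a' \<in> A" "c' \<in> C" "W - {a, c} = W - {a', c'}"
    then have "{a, c} = {a', c'}" using assms(2,3) by blast
    then show "a = a' \<and> c = c'" using ac(1-4) assms(4) by (auto simp: doubleton_eq_iff)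
  qed
  moreover have "finite A" "finite C" using assms(1-3) finite_subset by auto
  ultimately show ?thesis by (simp add: card_image card_cartesian_product)
qed

lemma is_unitrade_complement_pairs:
  assumes W: "card W = k + 2" and AC: "A \<union> C = W" "A \<inter> C = {}"
  shows "is_unitrade k ((\<lambda>(a, c). W - {a, c}) ` (A \<times> C))" (is "is_unitrade k ?U")
  unfolding is_unitrade_def
proof (intro conjI allI impI ballI)
  have fin_W: "finite W" using W card_ge_0_finite by force
  then show "finite ?U" using AC by auto
  show "finite B" "card B = k" if "B \<in> ?U" for B
  proof -
    obtain a c where "a \<in> A" "c \<in> C" "B = W - {a, c}" using \<open>B \<in> ?U\<close> by blast
    moreover have "a \<noteq> c" "{a, c} \<subseteq> W" using calculation AC by auto
    ultimately show "finite B" "card B = k" using fin_W W by (simp_all add: card_Diff_subset)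
  qed
  fix S :: "'a set" assume S: "finite S \<and> card S + 1 = k"
  show "even (card {B\<in>?U. S \<subseteq> B})"
  proof (cases "S \<subseteq> W")
    case False
    then have "{B\<in>?U. S \<subseteq> B} = {}" by auto
    then show ?thesis by (metis card.empty even_zero)
  next
    case True
    define R where "R = W - S"
    \<comment> \<open>a block contains S iff its two missing points lie in R\<close>
    have "{B\<in>?U. S \<subseteq> B} = (\<lambda>(a, c). W - {a, c}) ` ((A \<inter> R) \<times> (C \<inter> R))"
      using True AC unfolding R_def by auto
    moreover have "card ((\<lambda>(a, c). W - {a, c}) ` ((A \<inter> R) \<times> (C \<inter> R))) =
        card (A \<inter> R) * card (C \<inter> R)"
      by (rule card_complement_pairs[OF fin_W]) (use AC in auto)
    ultimately have "card {B\<in>?U. S \<subseteq> B} = card (A \<inter> R) * card (C \<inter> R)" by simp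
    moreover have "card (A \<inter> R) + card (C \<inter> R) = 3"
    proof -
      have "card R = 3" using card_Diff_subset[OF _ True] S W fin_W by (auto simp: R_def)
      moreover have "R = (A \<inter> R) \<union> (C \<inter> R)" "(A \<inter> R) \<inter> (C \<inter> R) = {}"
        using AC by (auto simp: R_def)
      moreover have "finite (A \<inter> R)" "finite (C \<inter> R)" using fin_W by (auto simp: R_def)
      ultimately show ?thesis using card_Un_disjoint by metis
    qed
    ultimately show ?thesis by (metis even_add even_mult_iff odd_numeral)
  qed
qed

section \<open>The configuration P\<close>

lemma P_trade_complement_pairs:
  "P_trade = (\<lambda>(a, c). {1..6} - {a, c}) ` ({1, 2, 3} \<times> {4, 5, 6::nat})"
proof -
  have "{1..6::nat} = {1, 2, 3, 4, 5, 6}" by auto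
  then show ?thesis by (simp add: P_trade_def insert_Diff_if insert_commute)
qed

lemma card_P_trade: "card P_trade = 9"
  unfolding P_trade_complement_pairs by (subst card_complement_pairs) auto

lemma bij_betw_disjoint_Un:
  assumes "finite A'" "finite C'" "finite A" "finite C"
    and "card A' = card A" "card C' = card C" "A' \<inter> C' = {}" "A \<inter> C = {}"
  obtains f where "bij_betw f (A' \<union> C') (A \<union> C)" "f ` A' = A" "f ` C' = C"
proof -
  obtain g h where g: "bij_betw g A' A" and h: "bij_betw h C' C"
    using finite_same_card_bij assms(1-6) by metis
  define f where "f i = (if i \<in> A' then g i else h i)" for i
  have "bij_betw f A' A" using g by (rule bij_betw_cong[THEN iffD1, rotated]) (simp add: f_def)
  moreover have "bij_betw f C' C"
    using h assms(7) by (intro bij_betw_cong[THEN iffD1, OF _ h]) (auto simp: f_def)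
  ultimately show ?thesis
    using that bij_betw_combine[OF _ _ assms(8)] by (metis bij_betw_imp_surj_on)
qed

lemma image_complement_pairs:
  assumes f: "bij_betw f X W" and "A \<subseteq> X" "C \<subseteq> X"
  shows "(`) f ` ((\<lambda>(a, c). X - {a, c}) ` (A \<times> C)) = (\<lambda>(a, c). W - {a, c}) ` (f ` A \<times> f ` C)"
proof -
  have "f ` (X - {a, c}) = W - {f a, f c}" if "a \<in> X" "c \<in> X" for a c
    using inj_on_image_set_diff[OF bij_betw_imp_inj_on[OF f], of X "{a, c}"] that
      bij_betw_imp_surj_on[OF f] by auto
  then show ?thesis using assms(2,3) by (auto simp: image_iff) blast+
qed

lemma unitrade_if_is_unitrade:
  assumes U: "is_unitrade k U" and "1 \<le> k" "finite V" "\<Union>U \<subseteq> V"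
  shows "unitrade k V U"
  unfolding unitrade_def
proof (intro conjI allI impI ballI)
  show "B \<subseteq> V" "card B = k" if "B \<in> U" for B
    using that assms(4) is_unitrade_block[OF U] by auto
  show "even (card {B\<in>U. S \<subseteq> B})" if S: "S \<subseteq> V \<and> card S = k - 1" for S
  proof (rule is_unitrade_even[OF U])
    show "finite S" using S assms(3) finite_subset by blast
    show "card S + 1 = k" using S assms(2) by simp
  qed
qed (rule assms(3))

lemma unitrade_P_trade: "unitrade 4 {1..6::nat} P_trade"
proof (rule unitrade_if_is_unitrade)
  show "is_unitrade 4 P_trade"
    unfolding P_trade_complement_pairs by (rule is_unitrade_complement_pairs) auto
  show "\<Union>P_trade \<subseteq> {1..6}" by (auto simp: P_trade_def)
qed simp_all

lemma equivalent_P_trade_complement_pairs: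
  assumes AC: "A \<union> C = W" "A \<inter> C = {}" "card A = 3" "card C = 3" and "W \<subseteq> V"
  shows "equivalent {1..6} P_trade V ((\<lambda>(a, c). W - {a, c}) ` (A \<times> C))"
proof -
  have "card {1, 2, 3::nat} = card A" "card {4, 5, 6::nat} = card C" using AC by simp_all
  then obtain f where f: "bij_betw f ({1, 2, 3} \<union> {4, 5, 6}) (A \<union> C)"
      "f ` {1, 2, 3} = A" "f ` {4, 5, 6::nat} = C"
    by (rule bij_betw_disjoint_Un[rotated 4]) (use AC card_ge_0_finite in auto)
  moreover have "{1, 2, 3} \<union> {4, 5, 6} = {1..6::nat}" by auto
  ultimately have bij: "bij_betw f {1..6} W" using AC(1) by simp
  have "(`) f ` P_trade = (\<lambda>(a, c). W - {a, c}) ` (f ` {1, 2, 3} \<times> f ` {4, 5, 6})"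
    unfolding P_trade_complement_pairs by (rule image_complement_pairs[OF bij]) auto
  then show ?thesis
    unfolding equivalent_def f(2,3)
    using bij_betw_imp_inj_on[OF bij] bij_betw_imp_surj_on[OF bij] \<open>W \<subseteq> V\<close>
    by (intro exI[of _ f]) auto
qed

lemma card_parts_complement_pairs_9:
  assumes W: "card W = 6" and AC: "A \<union> C = W" "A \<inter> C = {}"
    and card_9: "card ((\<lambda>(a, c). W - {a, c}) ` (A \<times> C)) = 9"
  shows "card A = 3" "card C = 3"
proof -
  have fin_W: "finite W" using W card_ge_0_finite by force
  then have fin: "finite A" "finite C" using AC(1) by (metis finite_Un)+
  have "card ((\<lambda>(a, c). W - {a, c}) ` (A \<times> C)) = card A * card C"
    by (rule card_complement_pairs[OF fin_W]) (use AC in auto)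
  then have "card A * card C = 9" using card_9 by simp
  moreover have "card A + card C = 6"
    using card_Un_disjoint[OF fin AC(2)] AC(1) W by simp
  then have "card C = 6 - card A" "card A \<le> 6" by auto
  ultimately have "card A * (6 - card A) = 9" "card A \<le> 6" by simp_all
  then show "card A = 3" by (auto simp: le_Suc_eq numeral_eq_Suc)
  then show "card C = 3" using \<open>card A + card C = 6\<close> by simp
qed

theorem proposition13:
  shows "unitrade 4 {1..6::nat} P_trade \<and> card P_trade = 9 \<and>
    (\<forall>(V::'a set) U. unitrade 4 V U \<and> card U = 9 \<longrightarrow> equivalent {1..6} P_trade V U)"
proof (intro conjI allI impI)
  show "unitrade 4 {1..6::nat} P_trade" by (rule unitrade_P_trade)
  show "card P_trade = 9" by (rule card_P_trade)
  fix V :: "'a set" and U assume "unitrade 4 V U \<and> card U = 9"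
  then have V: "unitrade 4 V U" and card_U: "card U = 9" by auto
  have U: "is_unitrade 4 U" using V by (rule is_unitrade_if_unitrade)
  define W where "W = \<Union>U"
  have card_W: "card W = 4 + 2" using card_Union_unitrade_4_9[OF U card_U] by (simp add: W_def)
  have "\<Union>U \<subseteq> W" by (simp add: W_def)
  then obtain A C where AC: "A \<union> C = W" "A \<inter> C = {}"
    and U_eq: "U = (\<lambda>(a, c). W - {a, c}) ` (A \<times> C)"
    by (rule unitrade_k_plus_2_bipartite[OF U _ card_W])
  have "card A = 3" "card C = 3"
    using card_parts_complement_pairs_9[OF _ AC] card_W card_U U_eq by simp_all
  moreover have "W \<subseteq> V" using V by (auto simp: W_def unitrade_def)
  ultimately show "equivalent {1..6} P_trade V U"
    unfolding U_eq using AC by (intro equivalent_P_trade_complement_pairs)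
qed

end
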